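(* Let $n\geq7$ and let $u,v\in G(J(P_{n-5}))$. If $uv\in G(J(P_{n-5})^2)$, then $(x_{n-1}x_{n-2}x_{n-4}u)(x_nx_{n-2}x_{n-4}v)\in G(J(P_n)^2)$.
   Context: For $m\geq1$, $P_m$ is the path graph on vertices $x_1,\ldots,x_m$ with edges $\{x_i,x_{i+1}\}$; $J(P_m)$ is its cover ideal in a polynomial ring over a field, generated by the monomials $\prod_{x\in C}x$ with $C$ a minimal vertex cover of $P_m$; $G(I)$ denotes the set of minimal monomial generators of a monomial ideal $I$. *)

theory Defs
  imports "HOL-Library.Multiset"
begin

text \<open>Monomials in the variables x_1, x_2, ... are represented by their exponent
multisets: the monomial x_{i1} x_{i2} ... x_{ik} is the multiset {#i1,...,ik#}.
Multiplication is multiset sum, divisibility is multiset inclusion.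
A monomial ideal is represented by the set of monomials it contains.\<close>

type_synonym monomial = "nat multiset"

definition path_vertex_cover :: "nat \<Rightarrow> nat set \<Rightarrow> bool" where
  "path_vertex_cover m C \<longleftrightarrow> C \<subseteq> {1..m} \<and>
     (\<forall>i. 1 \<le> i \<and> i < m \<longrightarrow> i \<in> C \<or> Suc i \<in> C)"

definition path_min_vertex_cover :: "nat \<Rightarrow> nat set \<Rightarrow> bool" where
  "path_min_vertex_cover m C \<longleftrightarrow> path_vertex_cover m C \<and>
     (\<forall>D. D \<subset> C \<longrightarrow> \<not> path_vertex_cover m D)"

definition mono_ideal :: "monomial set \<Rightarrow> monomial set" where
  "mono_ideal S = {w. \<exists>s\<in>S. s \<subseteq># w}"

definition mono_prod :: "monomial set \<Rightarrow> monomial set \<Rightarrow> monomial set" where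
  "mono_prod I J = {w. \<exists>a\<in>I. \<exists>b\<in>J. a + b \<subseteq># w}"

definition cover_ideal_path :: "nat \<Rightarrow> monomial set" where
  "cover_ideal_path m = mono_ideal {mset_set C | C. path_min_vertex_cover m C}"

definition min_gens :: "monomial set \<Rightarrow> monomial set" where
  "min_gens I = {w \<in> I. \<forall>w'\<in>I. w' \<subseteq># w \<longrightarrow> w' = w}"

end

(*
  The generators of J(P_m) are the monomials of vertex covers of P_m, and those of J(P_m)^2
  are the minimal sums of two such monomials.  Put m = n - 5, so u and v are the monomials of
  covers Cu, Cv of P_m.  The two factors are the monomials of the covers of P_n obtained by
  adding m+1, m+3, m+4 to Cu and m+1, m+3, m+5 to Cv.  Conversely, let C1, C2 be covers of P_n
  whose monomials multiply to a divisor of the product w.  Their parts in {1..m} cover P_m and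
  multiply to a divisor of uv, hence to uv itself.  Since x_(m+2) does not divide w, each Ci
  contains m+1, m+3 and one of m+4, m+5, so the parts above m have total degree at least 6,
  the degree of the part of w above m; hence that part is matched exactly too.
*)
theory Submission
  imports Defs "HOL-Library.Set_Algebras"
begin

lemma mono_prod_mono_ideal: "mono_prod (mono_ideal S) (mono_ideal T) = mono_ideal (S + T)"
proof (intro set_eqI iffI)
  fix w assume "w \<in> mono_prod (mono_ideal S) (mono_ideal T)"
  then obtain a b s t where "a + b \<subseteq># w" "s \<in> S" "s \<subseteq># a" "t \<in> T" "t \<subseteq># b"
    unfolding mono_prod_def mono_ideal_def by blast
  moreover from this have "s + t \<subseteq># w"
    by (meson subset_mset.add_mono subset_mset.order_trans)
  ultimately show "w \<in> mono_ideal (S + T)"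
    unfolding mono_ideal_def by blast
next
  fix w assume "w \<in> mono_ideal (S + T)"
  then obtain s t where "s \<in> S" "t \<in> T" "s + t \<subseteq># w"
    unfolding mono_ideal_def by (auto elim: set_plus_elim)
  then show "w \<in> mono_prod (mono_ideal S) (mono_ideal T)"
    unfolding mono_prod_def mono_ideal_def by blast
qed

lemma min_gens_mono_ideal_iff:
  "w \<in> min_gens (mono_ideal S) \<longleftrightarrow> w \<in> S \<and> (\<forall>s\<in>S. s \<subseteq># w \<longrightarrow> s = w)"
proof
  assume w: "w \<in> min_gens (mono_ideal S)"
  have S_ideal: "s \<in> mono_ideal S" if "s \<in> S" for s
    using that unfolding mono_ideal_def by blast
  have min: "s \<subseteq># w \<Longrightarrow> s \<in> S \<Longrightarrow> s = w" for s
    using w S_ideal unfolding min_gens_def by blast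
  obtain s where "s \<in> S" "s \<subseteq># w"
    using w unfolding min_gens_def mono_ideal_def by blast
  with min show "w \<in> S \<and> (\<forall>s\<in>S. s \<subseteq># w \<longrightarrow> s = w)" by blast
next
  assume w: "w \<in> S \<and> (\<forall>s\<in>S. s \<subseteq># w \<longrightarrow> s = w)"
  have "w' = w" if w': "w' \<in> mono_ideal S" "w' \<subseteq># w" for w'
  proof -
    obtain s where "s \<in> S" "s \<subseteq># w'"
      using w'(1) unfolding mono_ideal_def by blast
    with w'(2) w have "s = w"
      using subset_mset.order_trans by blast
    with \<open>s \<subseteq># w'\<close> w'(2) show "w' = w" by simp
  qed
  with w show "w \<in> min_gens (mono_ideal S)"
    unfolding min_gens_def mono_ideal_def by blast
qed

definition path_cover_monomials :: "nat \<Rightarrow> monomial set" where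
  "path_cover_monomials m = {mset_set C | C. path_vertex_cover m C}"

lemma path_vertex_cover_finite: "path_vertex_cover m C \<Longrightarrow> finite C"
  unfolding path_vertex_cover_def using finite_subset by blast

lemma path_vertex_cover_contains_min:
  assumes "path_vertex_cover m C"
  obtains D where "D \<subseteq> C" "path_min_vertex_cover m D"
proof -
  let ?covers = "{D. D \<subseteq> C \<and> path_vertex_cover m D}"
  obtain D where D: "D \<in> ?covers" and least: "\<And>E. E \<in> ?covers \<Longrightarrow> card D \<le> card E"
    using ex_has_least_nat[of "\<lambda>D. D \<in> ?covers" C card] assms by blast
  have "\<not> path_vertex_cover m E" if "E \<subset> D" for E
  proof
    assume "path_vertex_cover m E"
    with that D have "card D \<le> card E" by (intro least) auto
    moreover have "card E < card D"
      using D by (intro psubset_card_mono that) (auto dest: path_vertex_cover_finite)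
    ultimately show False by simp
  qed
  then have "path_min_vertex_cover m D"
    using D unfolding path_min_vertex_cover_def by blast
  with D show thesis by (intro that) auto
qed

lemma cover_ideal_path_eq: "cover_ideal_path m = mono_ideal (path_cover_monomials m)"
  unfolding cover_ideal_path_def path_cover_monomials_def mono_ideal_def
proof (intro Collect_cong iffI)
  fix w
  assume "\<exists>s\<in>{mset_set C |C. path_min_vertex_cover m C}. s \<subseteq># w"
  then show "\<exists>s\<in>{mset_set C |C. path_vertex_cover m C}. s \<subseteq># w"
    unfolding path_min_vertex_cover_def by blast
next
  fix w
  assume "\<exists>s\<in>{mset_set C |C. path_vertex_cover m C}. s \<subseteq># w"
  then obtain C where C: "path_vertex_cover m C" "mset_set C \<subseteq># w" by blast
  obtain D where "D \<subseteq> C" "path_min_vertex_cover m D"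
    using C(1) by (rule path_vertex_cover_contains_min)
  have "mset_set D \<subseteq># mset_set C"
    using \<open>D \<subseteq> C\<close> C(1) by (meson path_vertex_cover_finite subset_imp_msubset_mset_set)
  then have "mset_set D \<subseteq># w"
    using C(2) by (rule subset_mset.order_trans)
  with \<open>path_min_vertex_cover m D\<close>
  show "\<exists>s\<in>{mset_set C |C. path_min_vertex_cover m C}. s \<subseteq># w" by blast
qed

lemma path_cover_monomials_le:
  assumes "u \<in> path_cover_monomials m" "x \<in># u"
  shows "x \<le> m"
proof -
  obtain C where "path_vertex_cover m C" "u = mset_set C"
    using assms(1) unfolding path_cover_monomials_def by blast
  with assms(2) show ?thesis
    using path_vertex_cover_finite unfolding path_vertex_cover_def by auto
qed

lemma path_vertex_cover_restrict:
  assumes "path_vertex_cover n C" "m \<le> n"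
  shows "path_vertex_cover m {x \<in> C. x \<le> m}"
  using assms unfolding path_vertex_cover_def by auto

lemma path_vertex_cover_extend:
  assumes C: "path_vertex_cover m C" and "D \<subseteq> {1..n}" "m \<le> n"
    and D: "\<And>i. 1 \<le> i \<Longrightarrow> m \<le> i \<Longrightarrow> i < n \<Longrightarrow> i \<in> D \<or> Suc i \<in> D"
  shows "path_vertex_cover n (C \<union> D)"
  unfolding path_vertex_cover_def
proof (intro conjI allI impI)
  show "C \<union> D \<subseteq> {1..n}"
    using C assms(2,3) unfolding path_vertex_cover_def by auto
next
  fix i assume "1 \<le> i \<and> i < n"
  then show "i \<in> C \<union> D \<or> Suc i \<in> C \<union> D"
    using C D[of i] unfolding path_vertex_cover_def by (cases "i < m") auto
qed

lemma path_cover_monomials_tail: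
  assumes "u \<in> path_cover_monomials m" "k \<in> {m + 4, m + 5}"
  shows "{#k, m + 3, m + 1#} + u \<in> path_cover_monomials (m + 5)"
proof -
  obtain C where C: "path_vertex_cover m C" and u: "u = mset_set C"
    using assms(1) unfolding path_cover_monomials_def by blast
  let ?D = "{m + 1, m + 3, k}"
  have cover: "path_vertex_cover (m + 5) (C \<union> ?D)"
  proof (rule path_vertex_cover_extend[OF C])
    fix i assume "1 \<le> i" "m \<le> i" "i < m + 5"
    then have "i \<in> {m, m + 1, m + 2, m + 3, m + 4}" by auto
    then show "i \<in> ?D \<or> Suc i \<in> ?D" using assms(2) by auto
  qed (use assms(2) in auto)
  have "C \<inter> ?D = {}"
    using C assms(2) unfolding path_vertex_cover_def by auto
  then have "mset_set (C \<union> ?D) = mset_set C + mset_set ?D"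
    by (intro mset_set_Union path_vertex_cover_finite[OF C]) auto
  also have "mset_set ?D = {#k, m + 3, m + 1#}"
    using assms(2) by auto
  finally have "{#k, m + 3, m + 1#} + u = mset_set (C \<union> ?D)"
    by (simp only: u add.commute)
  with cover show ?thesis unfolding path_cover_monomials_def by blast
qed

lemma path_vertex_cover_tail_card:
  assumes C: "path_vertex_cover (m + 5) C" and "m + 2 \<notin> C"
  shows "3 \<le> card {x \<in> C. \<not> x \<le> m}"
proof -
  have edge: "i \<in> C \<or> Suc i \<in> C" if "1 \<le> i" "i < m + 5" for i
    using C that unfolding path_vertex_cover_def by blast
  have "m + 4 \<in> C \<or> m + 5 \<in> C"
    using edge[of "m + 4"] by (simp add: add.commute)
  then obtain k where k: "k \<in> {m + 4, m + 5}" "k \<in> C" by blast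
  have "finite {x \<in> C. \<not> x \<le> m}"
    using path_vertex_cover_finite[OF C] by simp
  moreover have "{m + 1, m + 3, k} \<subseteq> {x \<in> C. \<not> x \<le> m}"
    using edge[of "m + 1"] edge[of "m + 2"] assms(2) k by (auto simp: eval_nat_numeral)
  ultimately have "card {m + 1, m + 3, k} \<le> card {x \<in> C. \<not> x \<le> m}"
    by (rule card_mono)
  then show ?thesis using k(1) by auto
qed

lemma path_cover_sum_tail_minimal:
  fixes m :: nat and u v s :: monomial
  defines "w \<equiv> ({#m + 4, m + 3, m + 1#} + u) + ({#m + 5, m + 3, m + 1#} + v)"
  assumes u: "u \<in> path_cover_monomials m" and v: "v \<in> path_cover_monomials m"
    and min: "\<And>s. s \<in> path_cover_monomials m + path_cover_monomials m \<Longrightarrow>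
                    s \<subseteq># u + v \<Longrightarrow> s = u + v"
    and s: "s \<in> path_cover_monomials (m + 5) + path_cover_monomials (m + 5)"
    and sw: "s \<subseteq># w"
  shows "s = w"
proof -
  obtain C1 C2 where C1: "path_vertex_cover (m + 5) C1" and C2: "path_vertex_cover (m + 5) C2"
    and s_eq: "s = mset_set C1 + mset_set C2"
    using s unfolding path_cover_monomials_def set_plus_def by blast
  have fin: "finite C1" "finite C2"
    using C1 C2 by (auto intro: path_vertex_cover_finite)
  let ?low = "\<lambda>x. x \<le> m"
  let ?tail = "{#m + 4, m + 3, m + 1#} + {#m + 5, m + 3, m + 1#}"
  have "filter_mset ?low u = u" "filter_mset ?low v = v"
    using u v by (auto simp: filter_mset_eq_conv dest: path_cover_monomials_le)
  then have w_low: "filter_mset ?low w = u + v"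
    unfolding w_def by simp
  have "filter_mset (Not \<circ> ?low) u = {#}" "filter_mset (Not \<circ> ?low) v = {#}"
    using u v by (auto simp: filter_mset_eq_conv dest: path_cover_monomials_le)
  then have w_high: "filter_mset (\<lambda>x. \<not> ?low x) w = ?tail"
    unfolding w_def by (simp add: comp_def)
  have "filter_mset ?low s \<in> path_cover_monomials m + path_cover_monomials m"
    using s_eq fin path_vertex_cover_restrict[OF C1 le_add1]
      path_vertex_cover_restrict[OF C2 le_add1]
    unfolding path_cover_monomials_def by auto
  moreover have "filter_mset ?low s \<subseteq># u + v"
    using multiset_filter_mono[OF sw, of ?low] w_low by simp
  ultimately have s_low: "filter_mset ?low s = u + v"
    by (rule min)
  have "m + 2 \<notin># w"
    using path_cover_monomials_le[OF u, of "m + 2"] path_cover_monomials_le[OF v, of "m + 2"]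
    unfolding w_def by auto
  then have "m + 2 \<notin> C1" "m + 2 \<notin> C2"
    using mset_subset_eqD[OF sw] s_eq fin by auto
  then have "6 \<le> size (filter_mset (\<lambda>x. \<not> ?low x) s)"
    using path_vertex_cover_tail_card[OF C1] path_vertex_cover_tail_card[OF C2] s_eq fin by simp
  moreover have high_sub: "filter_mset (\<lambda>x. \<not> ?low x) s \<subseteq># ?tail"
    using multiset_filter_mono[OF sw, of "\<lambda>x. \<not> ?low x"] w_high by simp
  ultimately have "\<not> filter_mset (\<lambda>x. \<not> ?low x) s \<subset># ?tail"
    using mset_subset_size by fastforce
  with high_sub have s_high: "filter_mset (\<lambda>x. \<not> ?low x) s = ?tail"
    by (simp add: subset_mset.less_le)
  show ?thesis
    using multiset_partition[of s ?low] multiset_partition[of w ?low]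
    unfolding s_low s_high w_low w_high by simp
qed

theorem lemma3p14:
  fixes n :: nat and u v :: monomial
  assumes "n \<ge> 7"
    and "u \<in> min_gens (cover_ideal_path (n - 5))"
    and "v \<in> min_gens (cover_ideal_path (n - 5))"
    and "u + v \<in> min_gens (mono_prod (cover_ideal_path (n - 5)) (cover_ideal_path (n - 5)))"
  shows "({#n - 1, n - 2, n - 4#} + u) + ({#n, n - 2, n - 4#} + v)
           \<in> min_gens (mono_prod (cover_ideal_path n) (cover_ideal_path n))"
proof -
  obtain m where n: "n = m + 5"
    using assms(1) by (intro that[of "n - 5"]) simp
  note min_gens_via_covers = cover_ideal_path_eq mono_prod_mono_ideal min_gens_mono_ideal_iff
  have u: "u \<in> path_cover_monomials m" and v: "v \<in> path_cover_monomials m"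
    and min: "\<And>s. s \<in> path_cover_monomials m + path_cover_monomials m \<Longrightarrow>
                    s \<subseteq># u + v \<Longrightarrow> s = u + v"
    using assms(2-4) unfolding n min_gens_via_covers by auto
  have "({#m + 4, m + 3, m + 1#} + u) + ({#m + 5, m + 3, m + 1#} + v)
      \<in> path_cover_monomials (m + 5) + path_cover_monomials (m + 5)"
    by (intro set_plus_intro path_cover_monomials_tail u v) auto
  then have main: "({#m + 4, m + 3, m + 1#} + u) + ({#m + 5, m + 3, m + 1#} + v)
      \<in> min_gens (mono_prod (cover_ideal_path (m + 5)) (cover_ideal_path (m + 5)))"
    unfolding min_gens_via_covers using path_cover_sum_tail_minimal[OF u v min] by blast
  have shift: "n - 1 = m + 4" "n - 2 = m + 3" "n - 4 = m + 1"
    using n by simp_all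
  show ?thesis
    unfolding shift using main unfolding n[symmetric] .
qed

end
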